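(* Let $(\mathfrak{g},[\cdot,\cdot]_{\mathfrak{g}},\phi_{\mathfrak{g}})$ and $(\mathfrak g^*,[\cdot,\cdot]_{\mathfrak g^*},\phi_{\mathfrak g^*})$ be two weakly involutive Hom-Lie algebras ($\mathfrak g$ finite-dimensional, $\mathfrak g^*$ its dual space, $\phi_{\mathfrak g^*}$ an arbitrary linear map). Then $(\mathfrak g\oplus\mathfrak g^*;\mathfrak g,\mathfrak g^* )$ is a Manin triple of Hom-Lie algebras associated to the nondegenerate symmetric bilinear form $\mathfrak B(x+a,y+b)=\langle x,b\rangle+\langle y,a\rangle$ (i.e. there is a Hom-Lie algebra structure on $\mathfrak g\oplus\mathfrak g^*$ having $\mathfrak g$ and $\mathfrak g^*$ as Hom-Lie subalgebras with their given structures and for which $\mathfrak B$ is invariant) if and only if $\phi_{\mathfrak g^*}=\phi_{\mathfrak g}^*$ and $(\mathfrak g,\mathfrak g^*;\mathrm{ad}^\circ,\mathfrak{ad}^\circ)$ is a matched pair of Hom-Lie algebras.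
   Context: A Hom-Lie algebra $(\mathfrak{h},[\cdot,\cdot]_{\mathfrak{h}},\phi_{\mathfrak{h}})$: skew-symmetric bilinear bracket and linear map with $\phi_{\mathfrak h}[x,y]=[\phi_{\mathfrak h}x,\phi_{\mathfrak h}y]$ and $[\phi_{\mathfrak h}(x),[y,z]]+[\phi_{\mathfrak h}(y),[z,x]]+[\phi_{\mathfrak h}(z),[x,y]]=0$; weakly involutive if $[\phi_{\mathfrak h}^2(x),y]=[x,y]$. A representation $(V,\beta,\rho)$: $\beta\in\mathfrak{gl}(V)$, $\rho:\mathfrak h\to\mathfrak{gl}(V)$ with $\rho(\phi_{\mathfrak h}(x))\beta=\beta\rho(x)$ and $\rho([x,y])\beta=\rho(\phi_{\mathfrak h}(x))\rho(y)-\rho(\phi_{\mathfrak h}(y))\rho(x)$. $\mathrm{ad}^\circ:\mathfrak g\to\mathfrak{gl}(\mathfrak g^* )$, $\langle\mathrm{ad}^\circ_xa,y\rangle=-\langle a,[\phi_{\mathfrak g}(x),y]_{\mathfrak g}\rangle$; $\mathfrak{ad}^\circ:\mathfrak g^*\to\mathfrak{gl}(\mathfrak g)$, $\langle\mathfrak{ad}^\circ_ax,b\rangle=-\langle x,[\phi_{\mathfrak g^*}(a),b]_{\mathfrak g^*}\rangle$. A bilinear form $\mathfrak B$ on a Hom-Lie algebra $(\mathfrak k,[\cdot,\cdot]_{\mathfrak k},\phi_{\mathfrak k})$ is invariant if $\mathfrak B([x,y]_{\mathfrak k},z)=\mathfrak B(x,[\phi_{\mathfrak k}(y),z]_{\mathfrak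 k})$ and $\mathfrak B(\phi_{\mathfrak k}(x),y)=\mathfrak B(x,\phi_{\mathfrak k}(y))$. A Manin triple $(\mathfrak k;\mathfrak g,\mathfrak g')$: a Hom-Lie algebra $\mathfrak k$ with a nondegenerate symmetric invariant bilinear form such that $\mathfrak g,\mathfrak g'$ are isotropic Hom-Lie subalgebras and $\mathfrak k=\mathfrak g\oplus\mathfrak g'$ as vector spaces. A matched pair $(\mathfrak g,\mathfrak g';\rho,\rho')$: Hom-Lie algebras $\mathfrak g,\mathfrak g'$, representations $(\mathfrak g',\phi_{\mathfrak g'},\rho)$ of $\mathfrak g$ and $(\mathfrak g,\phi_{\mathfrak g},\rho')$ of $\mathfrak g'$ with, for all $x,y\in\mathfrak g$, $x',y'\in\mathfrak g'$: $\rho'(\phi_{\mathfrak g'}(x'))[x,y]_{\mathfrak g}=[\rho'(x')x,\phi_{\mathfrak g}(y)]_{\mathfrak g}+[\phi_{\mathfrak g}(x),\rho'(x')y]_{\mathfrak g}+\rho'(\rho(y)x')\phi_{\mathfrak g}(x)-\rho'(\rho(x)x')\phi_{\mathfrak g}(y)$ and $\rho(\phi_{\mathfrak g}(x))[x',y']_{\mathfrak g'}=[\rho(x)x',\phi_{\mathfrak g'}(y')]_{\mathfrak g'}+[\phi_{\mathfrak g'}(x'),\rho(x)y']_{\mathfrak g'}+\rho(\rho'(y')x)\phi_{\mathfrak g'}(x')-\rho(\rho'(x')x)\phi_{\mathfrak g'}(y')$. *)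

theory Defs
  imports Main
begin

text \<open>Finite-dimensional vector spaces over a field 'k are modelled as coordinate
spaces 'n \<Rightarrow> 'k with 'n a finite index type. The dual space of g = ('n \<Rightarrow> 'k)
is modelled as ('n \<Rightarrow> 'k) via the nondegenerate pairing pairing x a = sum_i x i * a i.
The direct sum g \<oplus> g* is modelled as ('n + 'n) \<Rightarrow> 'k.\<close>

definition vadd :: "('a \<Rightarrow> 'k::field) \<Rightarrow> ('a \<Rightarrow> 'k) \<Rightarrow> ('a \<Rightarrow> 'k)" where
  "vadd x y = (\<lambda>i. x i + y i)"

definition vsub :: "('a \<Rightarrow> 'k::field) \<Rightarrow> ('a \<Rightarrow> 'k) \<Rightarrow> ('a \<Rightarrow> 'k)" where
  "vsub x y = (\<lambda>i. x i - y i)"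

definition smul :: "'k::field \<Rightarrow> ('a \<Rightarrow> 'k) \<Rightarrow> ('a \<Rightarrow> 'k)" where
  "smul c x = (\<lambda>i. c * x i)"

definition vneg :: "('a \<Rightarrow> 'k::field) \<Rightarrow> ('a \<Rightarrow> 'k)" where
  "vneg x = (\<lambda>i. - x i)"

definition vzero :: "'a \<Rightarrow> 'k::field" where
  "vzero = (\<lambda>i. 0)"

definition lin :: "(('a \<Rightarrow> 'k::field) \<Rightarrow> ('b \<Rightarrow> 'k)) \<Rightarrow> bool" where
  "lin f \<longleftrightarrow> (\<forall>x y. f (vadd x y) = vadd (f x) (f y)) \<and> (\<forall>c x. f (smul c x) = smul c (f x))"

definition bilin :: "(('a \<Rightarrow> 'k::field) \<Rightarrow> ('b \<Rightarrow> 'k) \<Rightarrow> ('c \<Rightarrow> 'k)) \<Rightarrow> bool" where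
  "bilin br \<longleftrightarrow> (\<forall>x. lin (br x)) \<and> (\<forall>y. lin (\<lambda>x. br x y))"

definition hom_lie :: "(('a \<Rightarrow> 'k::field) \<Rightarrow> ('a \<Rightarrow> 'k) \<Rightarrow> ('a \<Rightarrow> 'k))
    \<Rightarrow> (('a \<Rightarrow> 'k) \<Rightarrow> ('a \<Rightarrow> 'k)) \<Rightarrow> bool" where
  "hom_lie br \<phi> \<longleftrightarrow> bilin br \<and> lin \<phi>
     \<and> (\<forall>x y. br x y = vneg (br y x))
     \<and> (\<forall>x y. \<phi> (br x y) = br (\<phi> x) (\<phi> y))
     \<and> (\<forall>x y z. vadd (vadd (br (\<phi> x) (br y z)) (br (\<phi> y) (br z x))) (br (\<phi> z) (br x y)) = vzero)"

definition weakly_involutive :: "(('a \<Rightarrow> 'k::field) \<Rightarrow> ('a \<Rightarrow> 'k) \<Rightarrow> ('a \<Rightarrow> 'k))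
    \<Rightarrow> (('a \<Rightarrow> 'k) \<Rightarrow> ('a \<Rightarrow> 'k)) \<Rightarrow> bool" where
  "weakly_involutive br \<phi> \<longleftrightarrow> (\<forall>x y. br (\<phi> (\<phi> x)) y = br x y)"

definition representation :: "(('a \<Rightarrow> 'k::field) \<Rightarrow> ('a \<Rightarrow> 'k) \<Rightarrow> ('a \<Rightarrow> 'k))
    \<Rightarrow> (('a \<Rightarrow> 'k) \<Rightarrow> ('a \<Rightarrow> 'k)) \<Rightarrow> (('b \<Rightarrow> 'k) \<Rightarrow> ('b \<Rightarrow> 'k))
    \<Rightarrow> (('a \<Rightarrow> 'k) \<Rightarrow> ('b \<Rightarrow> 'k) \<Rightarrow> ('b \<Rightarrow> 'k)) \<Rightarrow> bool" where
  "representation br \<phi> \<beta> \<rho> \<longleftrightarrow> lin \<beta> \<and> bilin \<rho>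
     \<and> (\<forall>x v. \<rho> (\<phi> x) (\<beta> v) = \<beta> (\<rho> x v))
     \<and> (\<forall>x y v. \<rho> (br x y) (\<beta> v) = vsub (\<rho> (\<phi> x) (\<rho> y v)) (\<rho> (\<phi> y) (\<rho> x v)))"

definition matched_pair :: "(('a \<Rightarrow> 'k::field) \<Rightarrow> ('a \<Rightarrow> 'k) \<Rightarrow> ('a \<Rightarrow> 'k))
    \<Rightarrow> (('a \<Rightarrow> 'k) \<Rightarrow> ('a \<Rightarrow> 'k))
    \<Rightarrow> (('b \<Rightarrow> 'k) \<Rightarrow> ('b \<Rightarrow> 'k) \<Rightarrow> ('b \<Rightarrow> 'k)) \<Rightarrow> (('b \<Rightarrow> 'k) \<Rightarrow> ('b \<Rightarrow> 'k))
    \<Rightarrow> (('a \<Rightarrow> 'k) \<Rightarrow> ('b \<Rightarrow> 'k) \<Rightarrow> ('b \<Rightarrow> 'k))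
    \<Rightarrow> (('b \<Rightarrow> 'k) \<Rightarrow> ('a \<Rightarrow> 'k) \<Rightarrow> ('a \<Rightarrow> 'k)) \<Rightarrow> bool" where
  "matched_pair br \<phi> br' \<phi>' \<rho> \<rho>' \<longleftrightarrow>
     hom_lie br \<phi> \<and> hom_lie br' \<phi>'
     \<and> representation br \<phi> \<phi>' \<rho> \<and> representation br' \<phi>' \<phi> \<rho>'
     \<and> (\<forall>x y x'. \<rho>' (\<phi>' x') (br x y) =
          vsub (vadd (vadd (br (\<rho>' x' x) (\<phi> y)) (br (\<phi> x) (\<rho>' x' y)))
                     (\<rho>' (\<rho> y x') (\<phi> x)))
               (\<rho>' (\<rho> x x') (\<phi> y)))
     \<and> (\<forall>x x' y'. \<rho> (\<phi> x) (br' x' y') =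
          vsub (vadd (vadd (br' (\<rho> x x') (\<phi>' y')) (br' (\<phi>' x') (\<rho> x y')))
                     (\<rho> (\<rho>' y' x) (\<phi>' x')))
               (\<rho> (\<rho>' x' x) (\<phi>' y')))"

definition pairing :: "('n::finite \<Rightarrow> 'k::field) \<Rightarrow> ('n \<Rightarrow> 'k) \<Rightarrow> 'k" where
  "pairing x a = (\<Sum>i\<in>UNIV. x i * a i)"

definition ad_circ :: "(('n::finite \<Rightarrow> 'k::field) \<Rightarrow> ('n \<Rightarrow> 'k) \<Rightarrow> ('n \<Rightarrow> 'k))
    \<Rightarrow> (('n \<Rightarrow> 'k) \<Rightarrow> ('n \<Rightarrow> 'k)) \<Rightarrow> ('n \<Rightarrow> 'k) \<Rightarrow> ('n \<Rightarrow> 'k) \<Rightarrow> ('n \<Rightarrow> 'k)" where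
  "ad_circ br \<phi> x a = (THE b. \<forall>y. pairing y b = - pairing (br (\<phi> x) y) a)"

definition coad_circ :: "(('n::finite \<Rightarrow> 'k::field) \<Rightarrow> ('n \<Rightarrow> 'k) \<Rightarrow> ('n \<Rightarrow> 'k))
    \<Rightarrow> (('n \<Rightarrow> 'k) \<Rightarrow> ('n \<Rightarrow> 'k)) \<Rightarrow> ('n \<Rightarrow> 'k) \<Rightarrow> ('n \<Rightarrow> 'k) \<Rightarrow> ('n \<Rightarrow> 'k)" where
  "coad_circ brs \<phi>s a x = (THE y. \<forall>b. pairing y b = - pairing x (brs (\<phi>s a) b))"

definition incl1 :: "('n \<Rightarrow> 'k::field) \<Rightarrow> ('n + 'n \<Rightarrow> 'k)" where
  "incl1 x = case_sum x (\<lambda>_. 0)"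

definition incl2 :: "('n \<Rightarrow> 'k::field) \<Rightarrow> ('n + 'n \<Rightarrow> 'k)" where
  "incl2 a = case_sum (\<lambda>_. 0) a"

definition formB :: "('n::finite + 'n \<Rightarrow> 'k::field) \<Rightarrow> ('n + 'n \<Rightarrow> 'k) \<Rightarrow> 'k" where
  "formB u v = pairing (u \<circ> Inl) (v \<circ> Inr) + pairing (v \<circ> Inl) (u \<circ> Inr)"

definition invariant_form :: "(('m \<Rightarrow> 'k::field) \<Rightarrow> ('m \<Rightarrow> 'k) \<Rightarrow> 'k)
    \<Rightarrow> (('m \<Rightarrow> 'k) \<Rightarrow> ('m \<Rightarrow> 'k) \<Rightarrow> ('m \<Rightarrow> 'k)) \<Rightarrow> (('m \<Rightarrow> 'k) \<Rightarrow> ('m \<Rightarrow> 'k)) \<Rightarrow> bool" where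
  "invariant_form B br \<phi> \<longleftrightarrow> (\<forall>x y z. B (br x y) z = B x (br (\<phi> y) z))
       \<and> (\<forall>x y. B (\<phi> x) y = B x (\<phi> y))"

end

theory Submission
  imports Defs "HOL-Library.Function_Algebras"
begin

text \<open>Invariance of B and nondegeneracy of the pairing pin down any Hom-Lie structure on
g + g* extending those of g and g*: its twist must be phi_g + phi_g*, which forces phi_g* to be
the dual of phi_g, and the bracket of x in g with a in g* must be ad-circ_x a minus
coad-circ_a x. So the only candidate is the double built from the two coadjoint actions.
For two Hom-Lie algebras acting on each other by bilinear maps, such a double is a Hom-Lie
algebra exactly when the actions form a matched pair: multiplicativity of the twist gives the
equivariance of the actions, and the Hom-Jacobi identity on triples of type (g, g, g*) and
(g, g*, g*) gives the bracket conditions of the representations and the two compatibility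
conditions. Conversely, once phi_g* is the dual of phi_g, weak involutivity makes B invariant
for the double.\<close>

lemma vadd_eq_plus: "vadd x y = x + y"
  by (simp add: vadd_def plus_fun_def)

lemma vsub_eq_minus: "vsub x y = x - y"
  by (simp add: vsub_def fun_diff_def)

lemma vneg_eq_uminus: "vneg x = - x"
  by (simp add: vneg_def fun_Compl_def)

lemma vzero_eq_zero: "vzero = 0"
  by (simp add: vzero_def zero_fun_def)

lemma smul_zero_left: "smul 0 x = 0"
  by (simp add: smul_def fun_eq_iff)

lemma smul_minus_one: "smul (-1) x = - x"
  by (simp add: smul_def fun_eq_iff)

lemma smul_add_right: "smul c (x + y) = smul c x + smul c y"
  by (simp add: smul_def fun_eq_iff algebra_simps)

lemma smul_diff_right: "smul c (x - y) = smul c x - smul c y"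
  by (simp add: smul_def fun_eq_iff algebra_simps)

lemma linI: "(\<And>x y. f (x + y) = f x + f y) \<Longrightarrow> (\<And>c x. f (smul c x) = smul c (f x)) \<Longrightarrow> lin f"
  by (simp add: lin_def vadd_eq_plus)

lemma lin_add: "lin f \<Longrightarrow> f (x + y) = f x + f y"
  by (simp add: lin_def vadd_eq_plus)

lemma lin_smul: "lin f \<Longrightarrow> f (smul c x) = smul c (f x)"
  by (simp add: lin_def)

lemma lin_zero: "lin f \<Longrightarrow> f 0 = 0"
  using lin_smul[of f 0 0] by (simp add: smul_zero_left)

lemma lin_minus: "lin f \<Longrightarrow> f (- x) = - f x"
  using lin_smul[of f "-1" x] by (simp add: smul_minus_one)

lemma lin_diff: "lin f \<Longrightarrow> f (x - y) = f x - f y"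
  using lin_add[of f x "- y"] lin_minus[of f y] by simp

lemma bilin_ladd: "bilin br \<Longrightarrow> br (x + x') y = br x y + br x' y"
  by (simp add: bilin_def lin_add[of "\<lambda>x. br x y"])

lemma bilin_radd: "bilin br \<Longrightarrow> br x (y + y') = br x y + br x y'"
  by (simp add: bilin_def lin_add[of "br x"])

lemma bilin_ldiff: "bilin br \<Longrightarrow> br (x - x') y = br x y - br x' y"
  by (simp add: bilin_def lin_diff[of "\<lambda>x. br x y"])

lemma bilin_rdiff: "bilin br \<Longrightarrow> br x (y - y') = br x y - br x y'"
  by (simp add: bilin_def lin_diff[of "br x"])

lemma bilin_lminus: "bilin br \<Longrightarrow> br (- x) y = - br x y"
  by (simp add: bilin_def lin_minus[of "\<lambda>x. br x y"])

lemma bilin_rminus: "bilin br \<Longrightarrow> br x (- y) = - br x y"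
  by (simp add: bilin_def lin_minus[of "br x"])

lemma bilin_lzero: "bilin br \<Longrightarrow> br 0 y = 0"
  by (simp add: bilin_def lin_zero[of "\<lambda>x. br x y"])

lemma bilin_rzero: "bilin br \<Longrightarrow> br x 0 = 0"
  by (simp add: bilin_def lin_zero[of "br x"])

lemma bilin_lsmul: "bilin br \<Longrightarrow> br (smul c x) y = smul c (br x y)"
  by (simp add: bilin_def lin_smul[of "\<lambda>x. br x y"])

lemma bilin_rsmul: "bilin br \<Longrightarrow> br x (smul c y) = smul c (br x y)"
  by (simp add: bilin_def lin_smul[of "br x"])

lemmas bilin_simps = bilin_ladd bilin_radd bilin_ldiff bilin_rdiff bilin_lminus bilin_rminus
  bilin_lzero bilin_rzero
lemmas lin_simps = lin_add lin_diff lin_minus lin_zero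

definition jacobiator :: "(('a \<Rightarrow> 'k::field) \<Rightarrow> ('a \<Rightarrow> 'k) \<Rightarrow> ('a \<Rightarrow> 'k))
    \<Rightarrow> (('a \<Rightarrow> 'k) \<Rightarrow> ('a \<Rightarrow> 'k)) \<Rightarrow> ('a \<Rightarrow> 'k) \<Rightarrow> ('a \<Rightarrow> 'k) \<Rightarrow> ('a \<Rightarrow> 'k) \<Rightarrow> ('a \<Rightarrow> 'k)" where
  "jacobiator br \<phi> x y z = br (\<phi> x) (br y z) + br (\<phi> y) (br z x) + br (\<phi> z) (br x y)"

lemma hom_lie_iff: "hom_lie br \<phi> \<longleftrightarrow> bilin br \<and> lin \<phi>
     \<and> (\<forall>x y. br x y = - br y x)
     \<and> (\<forall>x y. \<phi> (br x y) = br (\<phi> x) (\<phi> y))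
     \<and> (\<forall>x y z. jacobiator br \<phi> x y z = 0)"
  by (simp add: hom_lie_def jacobiator_def vadd_eq_plus vneg_eq_uminus vzero_eq_zero)

lemma representation_iff:
  assumes "lin \<beta>" and "bilin \<rho>"
  shows "representation br \<phi> \<beta> \<rho> \<longleftrightarrow> (\<forall>x v. \<rho> (\<phi> x) (\<beta> v) = \<beta> (\<rho> x v))
     \<and> (\<forall>x y v. \<rho> (br x y) (\<beta> v) = \<rho> (\<phi> x) (\<rho> y v) - \<rho> (\<phi> y) (\<rho> x v))"
  using assms by (simp add: representation_def vsub_eq_minus)

lemma jacobiator_cyclic: "jacobiator br \<phi> x y z = jacobiator br \<phi> y z x"
  by (simp add: jacobiator_def algebra_simps)

lemma jacobiator_ladd:
  assumes "bilin br" and "lin \<phi>"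
  shows "jacobiator br \<phi> (x + x') y z = jacobiator br \<phi> x y z + jacobiator br \<phi> x' y z"
  by (simp add: jacobiator_def bilin_ladd[OF assms(1)] bilin_radd[OF assms(1)] lin_add[OF assms(2)]
      algebra_simps)

lemma pairing_ladd: "pairing (x + y) a = pairing x a + pairing y a"
  by (simp add: pairing_def sum.distrib algebra_simps)

lemma pairing_radd: "pairing x (a + b) = pairing x a + pairing x b"
  by (simp add: pairing_def sum.distrib algebra_simps)

lemma pairing_ldiff: "pairing (x - y) a = pairing x a - pairing y a"
  by (simp add: pairing_def sum_subtractf algebra_simps)

lemma pairing_rdiff: "pairing x (a - b) = pairing x a - pairing x b"
  by (simp add: pairing_def sum_subtractf algebra_simps)

lemma pairing_lminus: "pairing (- x) a = - pairing x a"
  by (simp add: pairing_def sum_negf)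

lemma pairing_rminus: "pairing x (- a) = - pairing x a"
  by (simp add: pairing_def sum_negf)

lemma pairing_lzero: "pairing 0 a = 0"
  by (simp add: pairing_def)

lemma pairing_rzero: "pairing x 0 = 0"
  by (simp add: pairing_def)

lemma pairing_lsmul: "pairing (smul c x) a = c * pairing x a"
  by (simp add: pairing_def smul_def sum_distrib_left algebra_simps)

lemma pairing_commute: "pairing x a = pairing a x"
  by (simp add: pairing_def mult.commute)

lemma pairing_rsmul: "pairing x (smul c a) = c * pairing x a"
  by (simp add: pairing_commute[of x] pairing_lsmul)

lemmas pairing_simps = pairing_ladd pairing_radd pairing_ldiff pairing_rdiff
  pairing_lminus pairing_rminus pairing_lzero pairing_rzero

lemma pairing_indicator: "pairing (\<lambda>j. if j = i then 1 else 0) (a :: 'n::finite \<Rightarrow> 'k::field) = a i"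
  unfolding pairing_def by (subst sum.cong[OF refl, of _ _ "\<lambda>j. if j = i then a j else 0"]) auto

lemma pairing_ext_right:
  "(\<And>y. pairing y a = pairing y (b :: 'n::finite \<Rightarrow> 'k::field)) \<Longrightarrow> a = b"
  by (metis pairing_indicator ext)

lemma pairing_ext_left:
  "(\<And>b. pairing x b = pairing (y :: 'n::finite \<Rightarrow> 'k::field) b) \<Longrightarrow> x = y"
  by (metis pairing_commute pairing_ext_right)

lemma sum_fun_apply: "(\<Sum>i\<in>A. f i) x = (\<Sum>i\<in>A. f i x)"
  using sum_comp_morphism[of "\<lambda>g. g x" f A] by (simp add: comp_def)

lemma linear_functional_pairing:
  fixes L :: "('n::finite \<Rightarrow> 'k::field) \<Rightarrow> 'k"
  assumes add: "\<And>x y. L (x + y) = L x + L y" and hom: "\<And>c x. L (smul c x) = c * L x"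
  shows "\<exists>a. \<forall>y. L y = pairing y a"
proof (intro exI allI)
  fix y
  define e where "e i = (\<lambda>j. if j = i then (1::'k) else 0)" for i :: 'n
  have L0: "L 0 = 0"
    using hom[of 0 0] by (simp add: smul_zero_left)
  have "(\<Sum>i\<in>UNIV. smul (y i) (e i)) = y"
    by (rule ext) (simp add: e_def smul_def sum_fun_apply if_distrib cong: if_cong)
  then have "L y = L (\<Sum>i\<in>UNIV. smul (y i) (e i))"
    by simp
  also have "\<dots> = (\<Sum>i\<in>UNIV. L (smul (y i) (e i)))"
    by (simp only: sum_comp_morphism[of L, OF L0 add, symmetric] comp_def)
  also have "\<dots> = pairing y (\<lambda>i. L (e i))"
    by (simp add: pairing_def hom)
  finally show "L y = pairing y (\<lambda>i. L (e i))" .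
qed

subsection \<open>The coadjoint actions\<close>

lemma pairing_ad_circ:
  assumes "bilin brg"
  shows "pairing y (ad_circ brg \<phi> x a) = - pairing (brg (\<phi> x) y) a"
proof -
  let ?P = "\<lambda>b. \<forall>y. pairing y b = - pairing (brg (\<phi> x) y) a"
  have "\<exists>b. \<forall>y. - pairing (brg (\<phi> x) y) a = pairing y b"
    by (rule linear_functional_pairing)
      (simp_all add: bilin_radd[OF assms] bilin_rsmul[OF assms] pairing_ladd pairing_lsmul)
  then have "\<exists>!b. ?P b"
    by (metis pairing_ext_right)
  then have "?P (THE b. ?P b)"
    by (rule theI')
  then show ?thesis
    unfolding ad_circ_def by blast
qed

lemma pairing_coad_circ:
  assumes "bilin brs"
  shows "pairing (coad_circ brs \<phi> a x) b = - pairing x (brs (\<phi> a) b)"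
proof -
  let ?P = "\<lambda>y. \<forall>b. pairing y b = - pairing x (brs (\<phi> a) b)"
  have "\<exists>y. \<forall>b. - pairing x (brs (\<phi> a) b) = pairing b y"
    by (rule linear_functional_pairing)
      (simp_all add: bilin_radd[OF assms] bilin_rsmul[OF assms] pairing_radd pairing_lsmul
        pairing_commute[of x])
  then have "\<exists>!y. ?P y"
    by (metis pairing_ext_left pairing_commute)
  then have "?P (THE y. ?P y)"
    by (rule theI')
  then show ?thesis
    unfolding coad_circ_def by blast
qed

lemma bilin_ad_circ:
  assumes "bilin brg" and "lin \<phi>"
  shows "bilin (ad_circ brg \<phi>)"
  unfolding bilin_def
proof (intro allI conjI linI)
  fix x a b c
  show "ad_circ brg \<phi> x (a + b) = ad_circ brg \<phi> x a + ad_circ brg \<phi> x b"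
    by (rule pairing_ext_right) (simp add: pairing_ad_circ[OF assms(1)] pairing_simps)
  show "ad_circ brg \<phi> x (smul c a) = smul c (ad_circ brg \<phi> x a)"
    by (rule pairing_ext_right) (simp add: pairing_ad_circ[OF assms(1)] pairing_rsmul)
next
  fix a x y c
  show "ad_circ brg \<phi> (x + y) a = ad_circ brg \<phi> x a + ad_circ brg \<phi> y a"
    by (rule pairing_ext_right)
      (simp add: pairing_ad_circ[OF assms(1)] pairing_simps lin_add[OF assms(2)] bilin_ladd[OF assms(1)])
  show "ad_circ brg \<phi> (smul c x) a = smul c (ad_circ brg \<phi> x a)"
    by (rule pairing_ext_right)
      (simp add: pairing_ad_circ[OF assms(1)] pairing_rsmul pairing_lsmul lin_smul[OF assms(2)]
        bilin_lsmul[OF assms(1)])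
qed

lemma bilin_coad_circ:
  assumes "bilin brs" and "lin \<phi>"
  shows "bilin (coad_circ brs \<phi>)"
  unfolding bilin_def
proof (intro allI conjI linI)
  fix a x y c
  show "coad_circ brs \<phi> a (x + y) = coad_circ brs \<phi> a x + coad_circ brs \<phi> a y"
    by (rule pairing_ext_left) (simp add: pairing_coad_circ[OF assms(1)] pairing_simps)
  show "coad_circ brs \<phi> a (smul c x) = smul c (coad_circ brs \<phi> a x)"
    by (rule pairing_ext_left) (simp add: pairing_coad_circ[OF assms(1)] pairing_lsmul)
next
  fix x a b c
  show "coad_circ brs \<phi> (a + b) x = coad_circ brs \<phi> a x + coad_circ brs \<phi> b x"
    by (rule pairing_ext_left)
      (simp add: pairing_coad_circ[OF assms(1)] pairing_simps lin_add[OF assms(2)] bilin_ladd[OF assms(1)])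
  show "coad_circ brs \<phi> (smul c a) x = smul c (coad_circ brs \<phi> a x)"
    by (rule pairing_ext_left)
      (simp add: pairing_coad_circ[OF assms(1)] pairing_rsmul pairing_lsmul lin_smul[OF assms(2)]
        bilin_lsmul[OF assms(1)])
qed

definition dsum :: "('n \<Rightarrow> 'k::field) \<Rightarrow> ('n \<Rightarrow> 'k) \<Rightarrow> ('n + 'n \<Rightarrow> 'k)" where
  "dsum x a = case_sum x a"

definition dfst :: "('n + 'n \<Rightarrow> 'k::field) \<Rightarrow> ('n \<Rightarrow> 'k)" where
  "dfst u = u \<circ> Inl"

definition dsnd :: "('n + 'n \<Rightarrow> 'k::field) \<Rightarrow> ('n \<Rightarrow> 'k)" where
  "dsnd u = u \<circ> Inr"

lemma dfst_dsum [simp]: "dfst (dsum x a) = x"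
  by (simp add: dfst_def dsum_def comp_def)

lemma dsnd_dsum [simp]: "dsnd (dsum x a) = a"
  by (simp add: dsnd_def dsum_def comp_def)

lemma dsum_dfst_dsnd [simp]: "dsum (dfst u) (dsnd u) = u"
  by (simp add: dfst_def dsnd_def dsum_def fun_eq_iff split: sum.split)

lemma dsum_eq_iff [simp]: "dsum x a = dsum y b \<longleftrightarrow> x = y \<and> a = b"
  by (metis dfst_dsum dsnd_dsum)

lemma dsum_ext: "dfst u = dfst v \<Longrightarrow> dsnd u = dsnd v \<Longrightarrow> u = v"
  by (metis dsum_dfst_dsnd)

lemma dsum_add [simp]: "dsum x a + dsum y b = dsum (x + y) (a + b)"
  by (simp add: dsum_def fun_eq_iff split: sum.split)

lemma dsum_diff [simp]: "dsum x a - dsum y b = dsum (x - y) (a - b)"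
  by (simp add: dsum_def fun_eq_iff split: sum.split)

lemma dsum_uminus [simp]: "- dsum x a = dsum (- x) (- a)"
  by (simp add: dsum_def fun_eq_iff split: sum.split)

lemma dsum_smul [simp]: "smul c (dsum x a) = dsum (smul c x) (smul c a)"
  by (simp add: dsum_def smul_def fun_eq_iff split: sum.split)

lemma dsum_zero: "dsum 0 0 = 0"
  by (simp add: dsum_def fun_eq_iff split: sum.split)

lemma dsum_eq_zero_iff [simp]: "dsum x a = 0 \<longleftrightarrow> x = 0 \<and> a = 0"
  by (metis dsum_eq_iff dsum_zero)

lemma dfst_add [simp]: "dfst (u + v) = dfst u + dfst v"
  by (simp add: dfst_def fun_eq_iff)

lemma dsnd_add [simp]: "dsnd (u + v) = dsnd u + dsnd v"
  by (simp add: dsnd_def fun_eq_iff)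

lemma dfst_smul [simp]: "dfst (smul c u) = smul c (dfst u)"
  by (simp add: dfst_def smul_def fun_eq_iff)

lemma dsnd_smul [simp]: "dsnd (smul c u) = smul c (dsnd u)"
  by (simp add: dsnd_def smul_def fun_eq_iff)

lemma dfst_uminus [simp]: "dfst (- u) = - dfst u"
  by (simp add: dfst_def fun_eq_iff)

lemma dsnd_uminus [simp]: "dsnd (- u) = - dsnd u"
  by (simp add: dsnd_def fun_eq_iff)

lemma dsum_cases:
  obtains x a where "u = dsum x a"
  by (metis dsum_dfst_dsnd)

lemma dsum_split:
  obtains x a where "u = dsum x 0 + dsum 0 a"
  by (metis dsum_cases dsum_add add_0_left add_0_right)

lemma incl1_eq_dsum: "incl1 x = dsum x 0"
  by (simp add: incl1_def dsum_def zero_fun_def)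

lemma incl2_eq_dsum: "incl2 a = dsum 0 a"
  by (simp add: incl2_def dsum_def zero_fun_def)

lemma formB_eq: "formB u v = pairing (dfst u) (dsnd v) + pairing (dfst v) (dsnd u)"
  by (simp add: formB_def dfst_def dsnd_def)

lemma formB_lminus: "formB (- u) v = - formB u v"
  by (simp add: formB_eq pairing_lminus pairing_rminus)

subsection \<open>The double of two Hom-Lie algebras acting on each other\<close>

definition double_bracket :: "(('n \<Rightarrow> 'k::field) \<Rightarrow> ('n \<Rightarrow> 'k) \<Rightarrow> ('n \<Rightarrow> 'k))
    \<Rightarrow> (('n \<Rightarrow> 'k) \<Rightarrow> ('n \<Rightarrow> 'k) \<Rightarrow> ('n \<Rightarrow> 'k))
    \<Rightarrow> (('n \<Rightarrow> 'k) \<Rightarrow> ('n \<Rightarrow> 'k) \<Rightarrow> ('n \<Rightarrow> 'k)) \<Rightarrow> (('n \<Rightarrow> 'k) \<Rightarrow> ('n \<Rightarrow> 'k) \<Rightarrow> ('n \<Rightarrow> 'k))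
    \<Rightarrow> ('n + 'n \<Rightarrow> 'k) \<Rightarrow> ('n + 'n \<Rightarrow> 'k) \<Rightarrow> ('n + 'n \<Rightarrow> 'k)" where
  "double_bracket brg brs \<rho> \<rho>' u v =
     dsum (brg (dfst u) (dfst v) + \<rho>' (dsnd u) (dfst v) - \<rho>' (dsnd v) (dfst u))
          (brs (dsnd u) (dsnd v) + \<rho> (dfst u) (dsnd v) - \<rho> (dfst v) (dsnd u))"

definition double_twist :: "(('n \<Rightarrow> 'k::field) \<Rightarrow> ('n \<Rightarrow> 'k)) \<Rightarrow> (('n \<Rightarrow> 'k) \<Rightarrow> ('n \<Rightarrow> 'k))
    \<Rightarrow> ('n + 'n \<Rightarrow> 'k) \<Rightarrow> ('n + 'n \<Rightarrow> 'k)" where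
  "double_twist \<phi>g \<phi>s u = dsum (\<phi>g (dfst u)) (\<phi>s (dsnd u))"

lemma double_bracket_dsum [simp]:
  "double_bracket brg brs \<rho> \<rho>' (dsum x a) (dsum y b) =
     dsum (brg x y + \<rho>' a y - \<rho>' b x) (brs a b + \<rho> x b - \<rho> y a)"
  by (simp add: double_bracket_def)

lemma double_twist_dsum [simp]: "double_twist \<phi>g \<phi>s (dsum x a) = dsum (\<phi>g x) (\<phi>s a)"
  by (simp add: double_twist_def)

locale hom_lie_actions =
  fixes brg :: "('n \<Rightarrow> 'k::field) \<Rightarrow> ('n \<Rightarrow> 'k) \<Rightarrow> ('n \<Rightarrow> 'k)"
    and \<phi>g :: "('n \<Rightarrow> 'k) \<Rightarrow> ('n \<Rightarrow> 'k)"
    and brs :: "('n \<Rightarrow> 'k) \<Rightarrow> ('n \<Rightarrow> 'k) \<Rightarrow> ('n \<Rightarrow> 'k)"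
    and \<phi>s :: "('n \<Rightarrow> 'k) \<Rightarrow> ('n \<Rightarrow> 'k)"
    and \<rho> :: "('n \<Rightarrow> 'k) \<Rightarrow> ('n \<Rightarrow> 'k) \<Rightarrow> ('n \<Rightarrow> 'k)"
    and \<rho>' :: "('n \<Rightarrow> 'k) \<Rightarrow> ('n \<Rightarrow> 'k) \<Rightarrow> ('n \<Rightarrow> 'k)"
  assumes hom_lie_g: "hom_lie brg \<phi>g" and hom_lie_s: "hom_lie brs \<phi>s"
    and bilin_\<rho>: "bilin \<rho>" and bilin_\<rho>': "bilin \<rho>'"
begin

abbreviation "br \<equiv> double_bracket brg brs \<rho> \<rho>'"
abbreviation "\<phi> \<equiv> double_twist \<phi>g \<phi>s"

lemma bilin_g: "bilin brg" and lin_\<phi>g: "lin \<phi>g" and skew_g: "brg x y = - brg y x"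
  and mult_g: "\<phi>g (brg x y) = brg (\<phi>g x) (\<phi>g y)" and jacobi_g: "jacobiator brg \<phi>g x y z = 0"
  using hom_lie_g unfolding hom_lie_iff by blast+

lemma bilin_s: "bilin brs" and lin_\<phi>s: "lin \<phi>s" and skew_s: "brs a b = - brs b a"
  and mult_s: "\<phi>s (brs a b) = brs (\<phi>s a) (\<phi>s b)" and jacobi_s: "jacobiator brs \<phi>s a b c = 0"
  using hom_lie_s unfolding hom_lie_iff by blast+

lemmas linear_simps [simp] = bilin_simps[OF bilin_g] bilin_simps[OF bilin_s]
  bilin_simps[OF bilin_\<rho>] bilin_simps[OF bilin_\<rho>'] lin_simps[OF lin_\<phi>g] lin_simps[OF lin_\<phi>s]

lemma bilin_double_bracket: "bilin br"
  unfolding bilin_def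
  by (auto intro!: linI simp: algebra_simps smul_add_right smul_diff_right
      bilin_lsmul[OF bilin_g] bilin_lsmul[OF bilin_s] bilin_lsmul[OF bilin_\<rho>] bilin_lsmul[OF bilin_\<rho>']
      bilin_rsmul[OF bilin_g] bilin_rsmul[OF bilin_s] bilin_rsmul[OF bilin_\<rho>] bilin_rsmul[OF bilin_\<rho>']
      double_bracket_def)

lemma lin_double_twist: "lin \<phi>"
  by (auto intro!: linI simp: double_twist_def lin_smul[OF lin_\<phi>g] lin_smul[OF lin_\<phi>s])

lemma skew_double_bracket: "br u v = - br v u"
  by (simp add: double_bracket_def skew_g[of "dfst v"] skew_s[of "dsnd v"] algebra_simps)

lemma double_multiplicative_iff:
  "(\<forall>u v. \<phi> (br u v) = br (\<phi> u) (\<phi> v)) \<longleftrightarrow>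
     (\<forall>x a. \<rho> (\<phi>g x) (\<phi>s a) = \<phi>s (\<rho> x a)) \<and> (\<forall>a x. \<rho>' (\<phi>s a) (\<phi>g x) = \<phi>g (\<rho>' a x))"
proof
  assume mult: "\<forall>u v. \<phi> (br u v) = br (\<phi> u) (\<phi> v)"
  show "(\<forall>x a. \<rho> (\<phi>g x) (\<phi>s a) = \<phi>s (\<rho> x a)) \<and> (\<forall>a x. \<rho>' (\<phi>s a) (\<phi>g x) = \<phi>g (\<rho>' a x))"
    using mult[rule_format, of "dsum x 0" "dsum 0 a" for x a] by simp
next
  assume equivariant: "(\<forall>x a. \<rho> (\<phi>g x) (\<phi>s a) = \<phi>s (\<rho> x a)) \<and> (\<forall>a x. \<rho>' (\<phi>s a) (\<phi>g x) = \<phi>g (\<rho>' a x))"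
  show "\<forall>u v. \<phi> (br u v) = br (\<phi> u) (\<phi> v)"
  proof (intro allI)
    fix u v :: "'n + 'n \<Rightarrow> 'k"
    obtain x a y b where "u = dsum x a" and "v = dsum y b"
      by (meson dsum_cases)
    then show "\<phi> (br u v) = br (\<phi> u) (\<phi> v)"
      using equivariant by (simp add: mult_g mult_s)
  qed
qed

lemma jacobiator_double_ggg: "jacobiator br \<phi> (dsum x 0) (dsum y 0) (dsum z 0) = 0"
  using jacobi_g[of x y z] by (simp add: jacobiator_def)

lemma jacobiator_double_sss: "jacobiator br \<phi> (dsum 0 a) (dsum 0 b) (dsum 0 c) = 0"
  using jacobi_s[of a b c] by (simp add: jacobiator_def)

lemma jacobiator_double_ggs:
  "jacobiator br \<phi> (dsum x 0) (dsum y 0) (dsum 0 c) =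
     dsum (\<rho>' (\<phi>s c) (brg x y)
             - (brg (\<rho>' c x) (\<phi>g y) + brg (\<phi>g x) (\<rho>' c y) + \<rho>' (\<rho> y c) (\<phi>g x) - \<rho>' (\<rho> x c) (\<phi>g y)))
          (\<rho> (\<phi>g x) (\<rho> y c) - \<rho> (\<phi>g y) (\<rho> x c) - \<rho> (brg x y) (\<phi>s c))"
  by (simp add: jacobiator_def skew_g[of "\<rho>' c x"] algebra_simps)

lemma jacobiator_double_gss:
  "jacobiator br \<phi> (dsum x 0) (dsum 0 b) (dsum 0 c) =
     dsum (\<rho>' (\<phi>s b) (\<rho>' c x) - \<rho>' (\<phi>s c) (\<rho>' b x) - \<rho>' (brs b c) (\<phi>g x))
          (\<rho> (\<phi>g x) (brs b c)
             - (brs (\<rho> x b) (\<phi>s c) + brs (\<phi>s b) (\<rho> x c) + \<rho> (\<rho>' c x) (\<phi>s b) - \<rho> (\<rho>' b x) (\<phi>s c)))"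
  by (simp add: jacobiator_def skew_s[of "\<rho> x b"] algebra_simps)

lemma double_jacobi_iff:
  "(\<forall>u v w. jacobiator br \<phi> u v w = 0) \<longleftrightarrow>
     (\<forall>x y c. \<rho> (brg x y) (\<phi>s c) = \<rho> (\<phi>g x) (\<rho> y c) - \<rho> (\<phi>g y) (\<rho> x c))
   \<and> (\<forall>b c x. \<rho>' (brs b c) (\<phi>g x) = \<rho>' (\<phi>s b) (\<rho>' c x) - \<rho>' (\<phi>s c) (\<rho>' b x))
   \<and> (\<forall>x y c. \<rho>' (\<phi>s c) (brg x y) =
        brg (\<rho>' c x) (\<phi>g y) + brg (\<phi>g x) (\<rho>' c y) + \<rho>' (\<rho> y c) (\<phi>g x) - \<rho>' (\<rho> x c) (\<phi>g y))
   \<and> (\<forall>x b c. \<rho> (\<phi>g x) (brs b c) =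
        brs (\<rho> x b) (\<phi>s c) + brs (\<phi>s b) (\<rho> x c) + \<rho> (\<rho>' c x) (\<phi>s b) - \<rho> (\<rho>' b x) (\<phi>s c))"
  (is "?jacobi \<longleftrightarrow> ?rep_\<rho> \<and> ?rep_\<rho>' \<and> ?compat_g \<and> ?compat_s")
proof
  assume ?jacobi
  then show "?rep_\<rho> \<and> ?rep_\<rho>' \<and> ?compat_g \<and> ?compat_s"
    using jacobiator_double_ggs jacobiator_double_gss by (simp add: eq_commute[of _ "_ - _"])
next
  assume "?rep_\<rho> \<and> ?rep_\<rho>' \<and> ?compat_g \<and> ?compat_s"
  then have ggs: "jacobiator br \<phi> (dsum x 0) (dsum y 0) (dsum 0 c) = 0"
    and gss: "jacobiator br \<phi> (dsum x 0) (dsum 0 b) (dsum 0 c) = 0" for x y b c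
    by (simp_all add: jacobiator_double_ggs jacobiator_double_gss)
  then have gsg: "jacobiator br \<phi> (dsum x 0) (dsum 0 b) (dsum z 0) = 0"
    and sgg: "jacobiator br \<phi> (dsum 0 a) (dsum y 0) (dsum z 0) = 0"
    and sgs: "jacobiator br \<phi> (dsum 0 a) (dsum y 0) (dsum 0 c) = 0"
    and ssg: "jacobiator br \<phi> (dsum 0 a) (dsum 0 b) (dsum z 0) = 0" for x y z a b c
    by (metis jacobiator_cyclic)+
  have add1: "jacobiator br \<phi> (u + u') v w = jacobiator br \<phi> u v w + jacobiator br \<phi> u' v w"
    for u u' v w
    by (rule jacobiator_ladd[OF bilin_double_bracket lin_double_twist])
  then have add2: "jacobiator br \<phi> v (u + u') w = jacobiator br \<phi> v u w + jacobiator br \<phi> v u' w"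
    and add3: "jacobiator br \<phi> v w (u + u') = jacobiator br \<phi> v w u + jacobiator br \<phi> v w u'"
    for u u' v w
    by (metis jacobiator_cyclic)+
  show ?jacobi
  proof (intro allI)
    fix u v w :: "'n + 'n \<Rightarrow> 'k"
    obtain x a y b z c where "u = dsum x 0 + dsum 0 a" and "v = dsum y 0 + dsum 0 b"
      and "w = dsum z 0 + dsum 0 c"
      by (meson dsum_split)
    then show "jacobiator br \<phi> u v w = 0"
      by (simp only: add1 add2 add3 ggs gss gsg sgg sgs ssg
          jacobiator_double_ggg jacobiator_double_sss add_0_left)
  qed
qed

lemma double_extends:
  "(\<forall>x y. br (incl1 x) (incl1 y) = incl1 (brg x y)) \<and> (\<forall>x. \<phi> (incl1 x) = incl1 (\<phi>g x))
   \<and> (\<forall>a b. br (incl2 a) (incl2 b) = incl2 (brs a b)) \<and> (\<forall>a. \<phi> (incl2 a) = incl2 (\<phi>s a))"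
  by (simp add: incl1_eq_dsum incl2_eq_dsum)

theorem hom_lie_double_iff_matched_pair: "hom_lie br \<phi> \<longleftrightarrow> matched_pair brg \<phi>g brs \<phi>s \<rho> \<rho>'"
  unfolding hom_lie_iff[of br] matched_pair_def representation_iff[OF lin_\<phi>s bilin_\<rho>]
    representation_iff[OF lin_\<phi>g bilin_\<rho>'] double_multiplicative_iff double_jacobi_iff
    vadd_eq_plus vsub_eq_minus
  using hom_lie_g hom_lie_s bilin_double_bracket lin_double_twist skew_double_bracket by blast

end

lemma hom_lie_actions_coadjoint:
  fixes brg :: "('n::finite \<Rightarrow> 'k::field) \<Rightarrow> ('n \<Rightarrow> 'k) \<Rightarrow> ('n \<Rightarrow> 'k)"
  assumes "hom_lie brg \<phi>g" and "hom_lie brs \<phi>s"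
  shows "hom_lie_actions brg \<phi>g brs \<phi>s (ad_circ brg \<phi>g) (coad_circ brs \<phi>s)"
proof -
  have "bilin brg" and "lin \<phi>g" and "bilin brs" and "lin \<phi>s"
    using assms unfolding hom_lie_iff by blast+
  then show ?thesis
    using assms bilin_ad_circ bilin_coad_circ by unfold_locales
qed

subsection \<open>Manin triples\<close>

lemma invariant_form_double:
  fixes brg :: "('n::finite \<Rightarrow> 'k::field) \<Rightarrow> ('n \<Rightarrow> 'k) \<Rightarrow> ('n \<Rightarrow> 'k)"
  assumes "hom_lie brg \<phi>g" and "weakly_involutive brg \<phi>g"
    and "hom_lie brs \<phi>s" and "weakly_involutive brs \<phi>s"
    and adjoint: "\<And>x a. pairing x (\<phi>s a) = pairing (\<phi>g x) a"
  shows "invariant_form formB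
    (double_bracket brg brs (ad_circ brg \<phi>g) (coad_circ brs \<phi>s)) (double_twist \<phi>g \<phi>s)"
proof -
  have bg: "bilin brg" and skg: "\<And>x y. brg x y = - brg y x"
    and mg: "\<And>x y. \<phi>g (brg x y) = brg (\<phi>g x) (\<phi>g y)"
    using assms(1) unfolding hom_lie_iff by blast+
  have bs: "bilin brs" and sks: "\<And>a b. brs a b = - brs b a"
    and ms: "\<And>a b. \<phi>s (brs a b) = brs (\<phi>s a) (\<phi>s b)"
    using assms(3) unfolding hom_lie_iff by blast+
  have wg: "\<And>x y. brg (\<phi>g (\<phi>g x)) y = brg x y" and ws: "\<And>a b. brs (\<phi>s (\<phi>s a)) b = brs a b"
    using assms(2,4) unfolding weakly_involutive_def by blast+
  let ?ad = "ad_circ brg \<phi>g" and ?coad = "coad_circ brs \<phi>s"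
  txt \<open>Weak involutivity cancels the double twist that appears when the coadjoint actions are
    evaluated at twisted arguments.\<close>
  have ad_twist: "pairing x (?ad (\<phi>g y) c) = pairing (brg x y) c" for x y c
    by (simp add: pairing_ad_circ[OF bg] wg skg[of y x] pairing_lminus)
  have ad_twist': "pairing x (?ad z (\<phi>s b)) = pairing (brg (\<phi>g x) z) b" for x z b
    by (simp add: pairing_ad_circ[OF bg] adjoint mg wg skg[of z "\<phi>g x"] pairing_lminus)
  have coad_twist: "pairing (?coad (\<phi>s b) z) a = pairing z (brs a b)" for a b z
    by (simp add: pairing_coad_circ[OF bs] ws sks[of b a] pairing_rminus)
  have coad_twist': "pairing (?coad c (\<phi>g y)) a = pairing y (brs (\<phi>s a) c)" for a c y
    by (simp add: pairing_coad_circ[OF bs] adjoint[symmetric] ms ws sks[of c "\<phi>s a"] pairing_rminus)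
  show ?thesis
    unfolding invariant_form_def
  proof (intro conjI allI)
    fix u v w :: "'n + 'n \<Rightarrow> 'k"
    obtain x a y b z c where "u = dsum x a" and "v = dsum y b" and "w = dsum z c"
      by (meson dsum_cases)
    have "formB (double_bracket brg brs ?ad ?coad (dsum x a) (dsum y b)) (dsum z c) =
        pairing (brg x y) c - pairing y (brs (\<phi>s a) c) + pairing x (brs (\<phi>s b) c)
        + pairing z (brs a b) - pairing (brg (\<phi>g x) z) b + pairing (brg (\<phi>g y) z) a"
      by (simp add: formB_eq pairing_simps pairing_ad_circ[OF bg] pairing_coad_circ[OF bs])
    also have "\<dots> = formB (dsum x a) (double_bracket brg brs ?ad ?coad (dsum (\<phi>g y) (\<phi>s b)) (dsum z c))"
      by (simp add: formB_eq pairing_simps ad_twist ad_twist' coad_twist coad_twist')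
    finally show "formB (double_bracket brg brs ?ad ?coad u v) w =
        formB u (double_bracket brg brs ?ad ?coad (double_twist \<phi>g \<phi>s v) w)"
      using \<open>u = dsum x a\<close> \<open>v = dsum y b\<close> \<open>w = dsum z c\<close> by simp
  next
    fix u v :: "'n + 'n \<Rightarrow> 'k"
    show "formB (double_twist \<phi>g \<phi>s u) v = formB u (double_twist \<phi>g \<phi>s v)"
      by (cases u rule: dsum_cases, cases v rule: dsum_cases) (simp add: formB_eq adjoint add.commute)
  qed
qed

lemma adjoint_of_invariant_extension:
  assumes "invariant_form formB brK \<phi>K"
    and "\<forall>x. \<phi>K (incl1 x) = incl1 (\<phi>g x)" and "\<forall>a. \<phi>K (incl2 a) = incl2 (\<phi>s a)"
  shows "pairing x (\<phi>s a) = pairing (\<phi>g x) a"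
proof -
  have "formB (\<phi>K (dsum x 0)) (dsum 0 a) = formB (dsum x 0) (\<phi>K (dsum 0 a))"
    using assms(1) unfolding invariant_form_def by blast
  then show ?thesis
    using assms(2,3) by (simp add: incl1_eq_dsum incl2_eq_dsum formB_eq pairing_lzero)
qed

lemma eq_double_twist_of_extension:
  fixes \<phi>K :: "('n + 'n \<Rightarrow> 'k::field) \<Rightarrow> ('n + 'n \<Rightarrow> 'k)"
  assumes "lin \<phi>K"
    and "\<forall>x. \<phi>K (incl1 x) = incl1 (\<phi>g x)" and "\<forall>a. \<phi>K (incl2 a) = incl2 (\<phi>s a)"
  shows "\<phi>K = double_twist \<phi>g \<phi>s"
proof
  fix u :: "'n + 'n \<Rightarrow> 'k"
  obtain x a where u: "u = dsum x 0 + dsum 0 a"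
    by (rule dsum_split)
  have "\<phi>K u = \<phi>K (dsum x 0) + \<phi>K (dsum 0 a)"
    unfolding u by (rule lin_add[OF assms(1)])
  then show "\<phi>K u = double_twist \<phi>g \<phi>s u"
    using assms(2,3) by (simp add: u incl1_eq_dsum incl2_eq_dsum)
qed

lemma mixed_bracket_of_invariant_extension:
  fixes brg :: "('n::finite \<Rightarrow> 'k::field) \<Rightarrow> ('n \<Rightarrow> 'k) \<Rightarrow> ('n \<Rightarrow> 'k)"
  assumes "hom_lie brK \<phi>K" and "bilin brg" and "bilin brs"
    and "\<forall>x y. brK (incl1 x) (incl1 y) = incl1 (brg x y)"
    and "\<forall>x. \<phi>K (incl1 x) = incl1 (\<phi>g x)"
    and "\<forall>a b. brK (incl2 a) (incl2 b) = incl2 (brs a b)"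
    and "\<forall>a. \<phi>K (incl2 a) = incl2 (\<phi>s a)"
    and "invariant_form formB brK \<phi>K"
  shows "brK (dsum x 0) (dsum 0 b) = dsum (- coad_circ brs \<phi>s b x) (ad_circ brg \<phi>g x b)"
proof (rule dsum_ext)
  have skew: "brK u v = - brK v u" for u v
    using assms(1) unfolding hom_lie_iff by blast
  have invariant: "formB (brK u v) w = formB u (brK (\<phi>K v) w)" for u v w
    using assms(8) unfolding invariant_form_def by blast
  note extension = assms(4-7)[unfolded incl1_eq_dsum incl2_eq_dsum]
  show "dsnd (brK (dsum x 0) (dsum 0 b)) = dsnd (dsum (- coad_circ brs \<phi>s b x) (ad_circ brg \<phi>g x b))"
  proof (rule pairing_ext_right)
    fix y
    have "pairing y (dsnd (brK (dsum x 0) (dsum 0 b))) = formB (brK (dsum x 0) (dsum 0 b)) (dsum y 0)"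
      by (simp add: formB_eq pairing_rzero)
    also have "\<dots> = - formB (brK (dsum 0 b) (dsum x 0)) (dsum y 0)"
      by (subst skew) (rule formB_lminus)
    also have "\<dots> = - formB (dsum 0 b) (brK (dsum (\<phi>g x) 0) (dsum y 0))"
      using extension by (simp add: invariant)
    also have "\<dots> = pairing y (ad_circ brg \<phi>g x b)"
      using extension by (simp add: formB_eq pairing_lzero pairing_ad_circ[OF assms(2)])
    finally show "pairing y (dsnd (brK (dsum x 0) (dsum 0 b))) =
        pairing y (dsnd (dsum (- coad_circ brs \<phi>s b x) (ad_circ brg \<phi>g x b)))"
      by simp
  qed
  show "dfst (brK (dsum x 0) (dsum 0 b)) = dfst (dsum (- coad_circ brs \<phi>s b x) (ad_circ brg \<phi>g x b))"
  proof (rule pairing_ext_left)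
    fix c
    have "pairing (dfst (brK (dsum x 0) (dsum 0 b))) c = formB (brK (dsum x 0) (dsum 0 b)) (dsum 0 c)"
      by (simp add: formB_eq pairing_lzero)
    also have "\<dots> = formB (dsum x 0) (brK (dsum 0 (\<phi>s b)) (dsum 0 c))"
      using extension by (simp add: invariant)
    also have "\<dots> = pairing (- coad_circ brs \<phi>s b x) c"
      using extension by (simp add: formB_eq pairing_lzero pairing_lminus pairing_coad_circ[OF assms(3)])
    finally show "pairing (dfst (brK (dsum x 0) (dsum 0 b))) c =
        pairing (dfst (dsum (- coad_circ brs \<phi>s b x) (ad_circ brg \<phi>g x b))) c"
      by simp
  qed
qed

lemma eq_double_bracket_of_invariant_extension:
  fixes brg :: "('n::finite \<Rightarrow> 'k::field) \<Rightarrow> ('n \<Rightarrow> 'k) \<Rightarrow> ('n \<Rightarrow> 'k)"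
  assumes "hom_lie brK \<phi>K" and "bilin brg" and "bilin brs"
    and "\<forall>x y. brK (incl1 x) (incl1 y) = incl1 (brg x y)"
    and "\<forall>x. \<phi>K (incl1 x) = incl1 (\<phi>g x)"
    and "\<forall>a b. brK (incl2 a) (incl2 b) = incl2 (brs a b)"
    and "\<forall>a. \<phi>K (incl2 a) = incl2 (\<phi>s a)"
    and "invariant_form formB brK \<phi>K"
  shows "brK = double_bracket brg brs (ad_circ brg \<phi>g) (coad_circ brs \<phi>s)"
proof (rule ext, rule ext)
  fix u v :: "'n + 'n \<Rightarrow> 'k"
  have bilinear: "bilin brK" and skew: "\<And>u v. brK u v = - brK v u"
    using assms(1) unfolding hom_lie_iff by blast+
  note mixed = mixed_bracket_of_invariant_extension[OF assms]
  obtain x a y b where u: "u = dsum x 0 + dsum 0 a" and v: "v = dsum y 0 + dsum 0 b"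
    by (meson dsum_split)
  have "brK u v = brK (dsum x 0) (dsum y 0) + brK (dsum x 0) (dsum 0 b)
      - brK (dsum y 0) (dsum 0 a) + brK (dsum 0 a) (dsum 0 b)"
    unfolding u v
    by (simp only: bilin_ladd[OF bilinear] bilin_radd[OF bilinear] skew[of "dsum 0 a" "dsum y 0"])
      (simp add: algebra_simps)
  then show "brK u v = double_bracket brg brs (ad_circ brg \<phi>g) (coad_circ brs \<phi>s) u v"
    using assms(4,6) by (simp add: u v mixed incl1_eq_dsum incl2_eq_dsum)
qed

lemma matched_pair_of_invariant_extension:
  fixes brg :: "('n::finite \<Rightarrow> 'k::field) \<Rightarrow> ('n \<Rightarrow> 'k) \<Rightarrow> ('n \<Rightarrow> 'k)"
  assumes "hom_lie brg \<phi>g" and "hom_lie brs \<phi>s" and "hom_lie brK \<phi>K"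
    and "\<forall>x y. brK (incl1 x) (incl1 y) = incl1 (brg x y)"
    and "\<forall>x. \<phi>K (incl1 x) = incl1 (\<phi>g x)"
    and "\<forall>a b. brK (incl2 a) (incl2 b) = incl2 (brs a b)"
    and "\<forall>a. \<phi>K (incl2 a) = incl2 (\<phi>s a)"
    and "invariant_form formB brK \<phi>K"
  shows "(\<forall>x a. pairing x (\<phi>s a) = pairing (\<phi>g x) a)
    \<and> matched_pair brg \<phi>g brs \<phi>s (ad_circ brg \<phi>g) (coad_circ brs \<phi>s)"
proof -
  interpret hom_lie_actions brg \<phi>g brs \<phi>s "ad_circ brg \<phi>g" "coad_circ brs \<phi>s"
    using assms(1,2) by (rule hom_lie_actions_coadjoint)
  have "lin \<phi>K"
    using assms(3) unfolding hom_lie_iff by blast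
  then have "brK = br" and "\<phi>K = \<phi>"
    using eq_double_bracket_of_invariant_extension[OF assms(3) bilin_g bilin_s assms(4-8)]
      eq_double_twist_of_extension[OF _ assms(5,7)] by blast+
  then show ?thesis
    using assms(3) adjoint_of_invariant_extension[OF assms(8,5,7)] hom_lie_double_iff_matched_pair
    by simp
qed

theorem proposition3p6:
  fixes brg :: "('n::finite \<Rightarrow> 'k::field) \<Rightarrow> ('n \<Rightarrow> 'k) \<Rightarrow> ('n \<Rightarrow> 'k)"
    and \<phi>g :: "('n \<Rightarrow> 'k) \<Rightarrow> ('n \<Rightarrow> 'k)"
    and brs :: "('n \<Rightarrow> 'k) \<Rightarrow> ('n \<Rightarrow> 'k) \<Rightarrow> ('n \<Rightarrow> 'k)"
    and \<phi>s :: "('n \<Rightarrow> 'k) \<Rightarrow> ('n \<Rightarrow> 'k)"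
  assumes "hom_lie brg \<phi>g" and "weakly_involutive brg \<phi>g"
    and "hom_lie brs \<phi>s" and "weakly_involutive brs \<phi>s"
  shows "(\<exists>(brK :: ('n + 'n \<Rightarrow> 'k) \<Rightarrow> ('n + 'n \<Rightarrow> 'k) \<Rightarrow> ('n + 'n \<Rightarrow> 'k)) \<phi>K.
            hom_lie brK \<phi>K
          \<and> (\<forall>x y. brK (incl1 x) (incl1 y) = incl1 (brg x y))
          \<and> (\<forall>x. \<phi>K (incl1 x) = incl1 (\<phi>g x))
          \<and> (\<forall>a b. brK (incl2 a) (incl2 b) = incl2 (brs a b))
          \<and> (\<forall>a. \<phi>K (incl2 a) = incl2 (\<phi>s a))
          \<and> invariant_form formB brK \<phi>K)
     \<longleftrightarrow> ((\<forall>x a. pairing x (\<phi>s a) = pairing (\<phi>g x) a)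
          \<and> matched_pair brg \<phi>g brs \<phi>s (ad_circ brg \<phi>g) (coad_circ brs \<phi>s))"
proof -
  interpret D: hom_lie_actions brg \<phi>g brs \<phi>s "ad_circ brg \<phi>g" "coad_circ brs \<phi>s"
    using assms(1,3) by (rule hom_lie_actions_coadjoint)
  show ?thesis (is "?manin \<longleftrightarrow> ?matched")
  proof
    assume ?manin
    then show ?matched
      using matched_pair_of_invariant_extension[OF assms(1,3)] by blast
  next
    assume ?matched
    then have "hom_lie D.br D.\<phi>" and "invariant_form formB D.br D.\<phi>"
      using D.hom_lie_double_iff_matched_pair invariant_form_double[OF assms] by blast+
    then show ?manin
      using D.double_extends by blast
  qed
qed

end
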